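(* Let $(G,\oplus)$ be a gyrogroup and let $S\subseteq G\setminus\{e\}$ be symmetric. (1) If $\mathrm{gyr}[g,s](S)=S$ for all $s\in S$ and $g\in G$, then the R-Cayley graph $\mathrm{RCay}(G,S)$ is undirected. (2) Conversely, if $\mathrm{RCay}(G,S)$ is undirected, then $\mathrm{gyr}[g,s](s)\in S$ for all $g\in G$ and $s\in S$.
   Context: A gyrogroup is a nonempty set $G$ with a binary operation $\oplus$ such that: (i) there is a unique $e\in G$ with $e\oplus x=x=x\oplus e$ for all $x$; (ii) each $x\in G$ has a unique inverse $\ominus x$ with $\ominus x\oplus x=e=x\oplus(\ominus x)$; (iii) for all $x,y\in G$ there is an automorphism $\mathrm{gyr}[x,y]$ of $(G,\oplus)$ with $x\oplus(y\oplus z)=(x\oplus y)\oplus \mathrm{gyr}[x,y](z)$ for all $z\in G$; (iv) $\mathrm{gyr}[x\oplus y,y]=\mathrm{gyr}[x,y]$ for all $x,y$. A subset $S\subseteq G$ is symmetric if $\ominus s\in S$ for every $s\in S$. For $S\subseteq G$ with $e\notin S$, the R-Cayley graph $\mathrm{RCay}(G,S)$ is the directed graph with vertex set $G$ and a directed edge $u\to v$ iff $v=u\oplus s$ for some $s\in S$. The graph is undirected if whenever $u\to v$ is an edge, $v\to u$ is also an edge. *)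

theory Defs
  imports Main
begin

text \<open>Since gyr[x,y](z) is uniquely
  determined by the left loop property (left cancellation holds in gyrogroups),
  carrying gyr as data is equivalent to postulating its existence.\<close>

definition is_gyro_identity :: "'a set \<Rightarrow> ('a \<Rightarrow> 'a \<Rightarrow> 'a) \<Rightarrow> 'a \<Rightarrow> bool" where
  "is_gyro_identity G op e \<longleftrightarrow> e \<in> G \<and> (\<forall>x\<in>G. op e x = x \<and> op x e = x)"

definition gyro_id :: "'a set \<Rightarrow> ('a \<Rightarrow> 'a \<Rightarrow> 'a) \<Rightarrow> 'a" where
  "gyro_id G op = (THE e. is_gyro_identity G op e)"

definition gyro_inv :: "'a set \<Rightarrow> ('a \<Rightarrow> 'a \<Rightarrow> 'a) \<Rightarrow> 'a \<Rightarrow> 'a" where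
  "gyro_inv G op x = (THE y. y \<in> G \<and> op y x = gyro_id G op \<and> op x y = gyro_id G op)"

definition gyro_aut :: "'a set \<Rightarrow> ('a \<Rightarrow> 'a \<Rightarrow> 'a) \<Rightarrow> ('a \<Rightarrow> 'a) \<Rightarrow> bool" where
  "gyro_aut G op f \<longleftrightarrow> bij_betw f G G \<and> (\<forall>a\<in>G. \<forall>b\<in>G. f (op a b) = op (f a) (f b))"

definition gyrogroup :: "'a set \<Rightarrow> ('a \<Rightarrow> 'a \<Rightarrow> 'a) \<Rightarrow> ('a \<Rightarrow> 'a \<Rightarrow> 'a \<Rightarrow> 'a) \<Rightarrow> bool" where
  "gyrogroup G op gyr \<longleftrightarrow>
     G \<noteq> {} \<and>
     (\<forall>x\<in>G. \<forall>y\<in>G. op x y \<in> G) \<and>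
     (\<exists>!e. is_gyro_identity G op e) \<and>
     (\<forall>x\<in>G. \<exists>!y. y \<in> G \<and> op y x = gyro_id G op \<and> op x y = gyro_id G op) \<and>
     (\<forall>x\<in>G. \<forall>y\<in>G. gyro_aut G op (gyr x y)) \<and>
     (\<forall>x\<in>G. \<forall>y\<in>G. \<forall>z\<in>G. op x (op y z) = op (op x y) (gyr x y z)) \<and>
     (\<forall>x\<in>G. \<forall>y\<in>G. gyr (op x y) y = gyr x y)"

definition symmetric_subset :: "'a set \<Rightarrow> ('a \<Rightarrow> 'a \<Rightarrow> 'a) \<Rightarrow> 'a set \<Rightarrow> bool" where
  "symmetric_subset G op S \<longleftrightarrow> (\<forall>s\<in>S. gyro_inv G op s \<in> S)"

definition rcay_edge :: "'a set \<Rightarrow> ('a \<Rightarrow> 'a \<Rightarrow> 'a) \<Rightarrow> 'a set \<Rightarrow> 'a \<Rightarrow> 'a \<Rightarrow> bool" where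
  "rcay_edge G op S u v \<longleftrightarrow> u \<in> G \<and> v \<in> G \<and> (\<exists>s\<in>S. v = op u s)"

definition rcay_undirected :: "'a set \<Rightarrow> ('a \<Rightarrow> 'a \<Rightarrow> 'a) \<Rightarrow> 'a set \<Rightarrow> bool" where
  "rcay_undirected G op S \<longleftrightarrow> (\<forall>u v. rcay_edge G op S u v \<longrightarrow> rcay_edge G op S v u)"

end

theory Submission
  imports Defs
begin

text \<open>The left loop property gives (u \<oplus> s) \<oplus> gyr[u,s](\<ominus>s) = u \<oplus> (s \<oplus> \<ominus>s) = u, and by
  left cancellation gyr[u,s](\<ominus>s) = \<ominus>gyr[u,s](s) is the only label of an edge from
  u \<oplus> s back to u.  So the reverse edge exists iff \<ominus>gyr[u,s](s) \<in> S, which for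
  symmetric S means gyr[u,s](s) \<in> S.\<close>

locale gyrogroup_struct =
  fixes G :: "'a set" and op :: "'a \<Rightarrow> 'a \<Rightarrow> 'a" (infixl "\<oplus>" 65)
    and gyr :: "'a \<Rightarrow> 'a \<Rightarrow> 'a \<Rightarrow> 'a"
  assumes gyrogroup: "gyrogroup G op gyr"
begin

abbreviation e :: 'a where "e \<equiv> gyro_id G op"

abbreviation ginv :: "'a \<Rightarrow> 'a" ("\<ominus> _" [81] 80) where "\<ominus> x \<equiv> gyro_inv G op x"

lemma op_closed: "x \<in> G \<Longrightarrow> y \<in> G \<Longrightarrow> x \<oplus> y \<in> G"
  using gyrogroup unfolding gyrogroup_def by blast

lemma left_loop: "x \<in> G \<Longrightarrow> y \<in> G \<Longrightarrow> z \<in> G \<Longrightarrow> x \<oplus> (y \<oplus> z) = (x \<oplus> y) \<oplus> gyr x y z"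
  using gyrogroup unfolding gyrogroup_def by blast

lemma gyro_aut_gyr: "x \<in> G \<Longrightarrow> y \<in> G \<Longrightarrow> gyro_aut G op (gyr x y)"
  using gyrogroup unfolding gyrogroup_def by blast

lemma gyr_closed: "x \<in> G \<Longrightarrow> y \<in> G \<Longrightarrow> z \<in> G \<Longrightarrow> gyr x y z \<in> G"
  using gyro_aut_gyr unfolding gyro_aut_def bij_betw_def by blast

lemma gyr_inj: "x \<in> G \<Longrightarrow> y \<in> G \<Longrightarrow> inj_on (gyr x y) G"
  using gyro_aut_gyr unfolding gyro_aut_def bij_betw_def by blast

lemma gyr_op: "x \<in> G \<Longrightarrow> y \<in> G \<Longrightarrow> a \<in> G \<Longrightarrow> b \<in> G \<Longrightarrow> gyr x y (a \<oplus> b) = gyr x y a \<oplus> gyr x y b"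
  using gyro_aut_gyr unfolding gyro_aut_def by blast

lemma gyro_identity: "is_gyro_identity G op e"
  unfolding gyro_id_def by (rule theI') (use gyrogroup in \<open>simp add: gyrogroup_def\<close>)

lemma id_closed: "e \<in> G"
  and id_left: "x \<in> G \<Longrightarrow> e \<oplus> x = x"
  and id_right: "x \<in> G \<Longrightarrow> x \<oplus> e = x"
  using gyro_identity unfolding is_gyro_identity_def by auto

lemma gyro_inverse:
  assumes "x \<in> G" shows "\<ominus> x \<in> G \<and> \<ominus> x \<oplus> x = e \<and> x \<oplus> \<ominus> x = e"
  unfolding gyro_inv_def by (rule theI') (use gyrogroup assms in \<open>simp add: gyrogroup_def\<close>)

lemma inv_closed: "x \<in> G \<Longrightarrow> \<ominus> x \<in> G"
  and inv_left: "x \<in> G \<Longrightarrow> \<ominus> x \<oplus> x = e"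
  and inv_right: "x \<in> G \<Longrightarrow> x \<oplus> \<ominus> x = e"
  using gyro_inverse by auto

lemma left_cancel:
  assumes "a \<in> G" "b \<in> G" "c \<in> G" and "a \<oplus> b = a \<oplus> c"
  shows "b = c"
proof -
  have "gyr (\<ominus> a) a x = \<ominus> a \<oplus> (a \<oplus> x)" if "x \<in> G" for x
    using left_loop[OF inv_closed \<open>a \<in> G\<close> that] inv_left id_left gyr_closed inv_closed assms(1) that
    by simp
  then have "gyr (\<ominus> a) a b = gyr (\<ominus> a) a c"
    using assms by simp
  then show ?thesis
    using gyr_inj[OF inv_closed \<open>a \<in> G\<close>] assms(1-3) by (auto dest: inj_onD)
qed

lemma inv_unique:
  assumes "x \<in> G" "y \<in> G" "x \<oplus> y = e"
  shows "y = \<ominus> x"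
  using left_cancel[OF assms(1,2) inv_closed[OF assms(1)]] inv_right[OF assms(1)] assms(3) by simp

lemma inv_inv: "x \<in> G \<Longrightarrow> \<ominus> (\<ominus> x) = x"
  using inv_unique[OF inv_closed _ inv_left] by simp

lemma gyr_id:
  assumes "x \<in> G" "y \<in> G"
  shows "gyr x y e = e"
proof (rule left_cancel[OF gyr_closed[OF assms id_closed] gyr_closed[OF assms id_closed] id_closed])
  show "gyr x y e \<oplus> gyr x y e = gyr x y e \<oplus> e"
    using gyr_op[OF assms id_closed id_closed] id_right[OF id_closed]
      id_right[OF gyr_closed[OF assms id_closed]] by simp
qed

lemma gyr_inv:
  assumes "x \<in> G" "y \<in> G" "z \<in> G"
  shows "gyr x y (\<ominus> z) = \<ominus> gyr x y z"
proof (rule inv_unique[OF gyr_closed[OF assms] gyr_closed[OF assms(1,2) inv_closed[OF assms(3)]]])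
  show "gyr x y z \<oplus> gyr x y (\<ominus> z) = e"
    using gyr_op[OF assms inv_closed[OF assms(3)]] inv_right[OF assms(3)] gyr_id[OF assms(1,2)] by simp
qed

lemma op_gyr_inv_cancel:
  assumes "u \<in> G" "s \<in> G"
  shows "(u \<oplus> s) \<oplus> gyr u s (\<ominus> s) = u"
  using left_loop[OF assms inv_closed[OF assms(2)]] inv_right[OF assms(2)] id_right[OF assms(1)] by simp

lemma back_edge_label:
  assumes "u \<in> G" "s \<in> G" "t \<in> G" and "(u \<oplus> s) \<oplus> t = u"
  shows "t = \<ominus> gyr u s s"
proof -
  have "t = gyr u s (\<ominus> s)"
    using left_cancel[OF op_closed[OF assms(1,2)] assms(3) gyr_closed[OF assms(1,2) inv_closed[OF assms(2)]]]
      assms(4) op_gyr_inv_cancel[OF assms(1,2)] by simp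
  with assms(1,2) show ?thesis by (simp add: gyr_inv)
qed

lemma rcay_undirected_if_gyr_invariant:
  assumes "S \<subseteq> G" "symmetric_subset G op S"
    and invariant: "\<And>g s. g \<in> G \<Longrightarrow> s \<in> S \<Longrightarrow> gyr g s ` S \<subseteq> S"
  shows "rcay_undirected G op S"
  unfolding rcay_undirected_def
proof (intro allI impI)
  fix u v
  assume "rcay_edge G op S u v"
  then obtain s where "u \<in> G" "v \<in> G" "s \<in> S" and v: "v = u \<oplus> s"
    unfolding rcay_edge_def by blast
  have "gyr u s (\<ominus> s) \<in> S"
    using invariant[OF \<open>u \<in> G\<close> \<open>s \<in> S\<close>] assms(2) \<open>s \<in> S\<close> unfolding symmetric_subset_def by blast
  moreover have "u = v \<oplus> gyr u s (\<ominus> s)"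
    using op_gyr_inv_cancel \<open>u \<in> G\<close> \<open>s \<in> S\<close> assms(1) v by auto
  ultimately show "rcay_edge G op S v u"
    unfolding rcay_edge_def using \<open>u \<in> G\<close> \<open>v \<in> G\<close> by blast
qed

lemma gyr_mem_if_rcay_undirected:
  assumes "S \<subseteq> G" "symmetric_subset G op S" "rcay_undirected G op S"
    and "g \<in> G" "s \<in> S"
  shows "gyr g s s \<in> S"
proof -
  have "s \<in> G" using assms(1,5) by blast
  then have "rcay_edge G op S g (g \<oplus> s)"
    unfolding rcay_edge_def using assms(4,5) op_closed by blast
  then have "rcay_edge G op S (g \<oplus> s) g"
    using assms(3) unfolding rcay_undirected_def by blast
  then obtain t where "t \<in> S" and t: "g = (g \<oplus> s) \<oplus> t"
    unfolding rcay_edge_def by blast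
  have "t = \<ominus> gyr g s s"
    using back_edge_label[OF assms(4) \<open>s \<in> G\<close> _ t[symmetric]] \<open>t \<in> S\<close> assms(1) by blast
  then have "gyr g s s = \<ominus> t"
    using inv_inv[OF gyr_closed[OF assms(4) \<open>s \<in> G\<close> \<open>s \<in> G\<close>]] by simp
  with \<open>t \<in> S\<close> assms(2) show ?thesis
    unfolding symmetric_subset_def by simp
qed

end

theorem mainTheorem3:
  fixes G :: "'a set" and op :: "'a \<Rightarrow> 'a \<Rightarrow> 'a" and gyr :: "'a \<Rightarrow> 'a \<Rightarrow> 'a \<Rightarrow> 'a"
    and S :: "'a set"
  assumes "gyrogroup G op gyr"
    and "S \<subseteq> G - {gyro_id G op}"
    and "symmetric_subset G op S"
  shows "((\<forall>g\<in>G. \<forall>s\<in>S. gyr g s ` S = S) \<longrightarrow> rcay_undirected G op S)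
       \<and> (rcay_undirected G op S \<longrightarrow> (\<forall>g\<in>G. \<forall>s\<in>S. gyr g s s \<in> S))"
proof -
  interpret gyrogroup_struct G op gyr
    using assms(1) by unfold_locales
  have "S \<subseteq> G" using assms(2) by blast
  show ?thesis
  proof (intro conjI impI ballI)
    assume "\<forall>g\<in>G. \<forall>s\<in>S. gyr g s ` S = S"
    then show "rcay_undirected G op S"
      by (intro rcay_undirected_if_gyr_invariant[OF \<open>S \<subseteq> G\<close> assms(3)]) simp
  next
    fix g s
    assume "rcay_undirected G op S" "g \<in> G" "s \<in> S"
    then show "gyr g s s \<in> S"
      by (rule gyr_mem_if_rcay_undirected[OF \<open>S \<subseteq> G\<close> assms(3)])
  qed
qed

end
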